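(* Let $A_1,\dots,A_5$ be linearly independent symmetric $5\times5$ complex matrices such that $\tilde X=\{([z],[w])\in\mathbb{P}^4\times\mathbb{P}^4:{}^tzA_iw=0,\ i=1,\dots,5\}$ is a smooth threefold. Let $H=\{[y]\in\mathbb{P}^4:\det(\sum y_iA_i)=0\}$ and $U=\{([y],[w])\in H\times\mathbb{P}^4:(\sum y_iA_i)w=0\}$. Then $U$ is smooth. *)

theory Defs
  imports "HOL-Analysis.Analysis"
begin

definition mat_comb :: "complex^5 \<Rightarrow> (5 \<Rightarrow> complex^5^5) \<Rightarrow> complex^5^5" where
  "mat_comb y A = (\<chi> r s. \<Sum>i\<in>UNIV. y $ i * (A i $ r $ s))"

definition mats_lin_indep :: "(5 \<Rightarrow> complex^5^5) \<Rightarrow> bool" where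
  "mats_lin_indep A \<longleftrightarrow> (\<forall>c. mat_comb c A = 0 \<longrightarrow> c = 0)"

definition sym_mat :: "complex^5^5 \<Rightarrow> bool" where
  "sym_mat M \<longleftrightarrow> transpose M = M"

definition eqs_X :: "(5 \<Rightarrow> complex^5^5) \<Rightarrow> (complex^5) \<times> (complex^5) \<Rightarrow> complex^5" where
  "eqs_X A = (\<lambda>(z, w). \<chi> i. \<Sum>r\<in>UNIV. z $ r * ((A i *v w) $ r))"

definition eqs_U :: "(5 \<Rightarrow> complex^5^5) \<Rightarrow> (complex^5) \<times> (complex^5) \<Rightarrow> complex^5" where
  "eqs_U A = (\<lambda>(y, w). mat_comb y A *v w)"

text \<open>The subvariety of P^4 x P^4 cut out by five bihomogeneous equations F
  (at points additionally satisfying the side condition P) is smooth of the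
  expected dimension 8 - 5 = 3: at every point ([a],[b]) of it (a, b nonzero
  representatives) the Jacobian of F on the affine cone C^5 x C^5 has full
  rank 5, i.e. the derivative is surjective (Jacobian criterion).\<close>
definition smooth_ci_P4P4 ::
  "((complex^5) \<times> (complex^5) \<Rightarrow> complex^5) \<Rightarrow> ((complex^5) \<times> (complex^5) \<Rightarrow> bool) \<Rightarrow> bool" where
  "smooth_ci_P4P4 F P \<longleftrightarrow>
     (\<forall>a b. a \<noteq> 0 \<and> b \<noteq> 0 \<and> P (a, b) \<and> F (a, b) = 0 \<longrightarrow>
        (\<exists>L. (F has_derivative L) (at (a, b)) \<and> surj L))"

end

theory Submission
  imports Defs
begin

text \<open>If the derivative of the equations of \<open>U\<close> at \<open>(y, w)\<close> were not surjective, a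
  nonzero covector \<open>u\<close> would annihilate its image. Annihilating the \<open>y\<close>-directions says
  \<open>u\<^sup>t A\<^sub>i w = 0\<close> for all \<open>i\<close>, i.e. \<open>([u], [w])\<close> lies on \<open>X~\<close>; annihilating the
  \<open>w\<close>-directions says \<open>u\<^sup>t (\<Sum> y\<^sub>i A\<^sub>i) = 0\<close>. Together with \<open>(\<Sum> y\<^sub>i A\<^sub>i) w = 0\<close>
  this shows that the derivative of the equations of \<open>X~\<close> at \<open>(u, w)\<close> takes values in
  the hyperplane \<open>\<Sum> y\<^sub>i t\<^sub>i = 0\<close>, contradicting smoothness of \<open>X~\<close>.\<close>

definition dot :: "'a::comm_semiring_0^'n \<Rightarrow> 'a^'n \<Rightarrow> 'a" where
  "dot u x = (\<Sum>r\<in>UNIV. u $ r * x $ r)"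

lemma dot_zero_right: "dot u 0 = 0"
  by (simp add: dot_def)

lemma dot_add_right: "dot u (x + y) = dot u x + dot u y"
  by (simp add: dot_def distrib_left sum.distrib)

lemma dot_scalar_right: "dot u (c *s x) = c * dot u x"
  by (simp add: dot_def sum_distrib_left mult_ac)

lemma dot_axis_left: "dot (axis i 1) (x :: 'a::comm_semiring_1^'n) = x $ i"
  unfolding dot_def axis_def by (simp add: if_distrib[where f = "\<lambda>a. a * _"] cong: if_cong)

lemma dot_axis_right: "dot x (axis i 1) = (x :: 'a::comm_semiring_1^'n) $ i"
  unfolding dot_def axis_def by (simp add: if_distrib[where f = "\<lambda>a. _ * a"] cong: if_cong)

lemma inner_eq_Re_dot_cnj: "a \<bullet> x = Re (dot (\<chi> r. cnj (a $ r)) x)"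
  by (simp add: inner_vec_def inner_complex_def dot_def)

lemma exists_annihilator_if_not_surj:
  fixes L :: "'a::euclidean_space \<Rightarrow> complex^'n"
  assumes "linear L" and "\<not> surj L"
    and imag_closed: "\<And>x. x \<in> range L \<Longrightarrow> \<i> *s x \<in> range L"
  obtains u where "u \<noteq> 0" and "\<And>d. dot u (L d) = 0"
proof -
  have span_eq: "span (range L) = range L"
    using linear_subspace_image[OF assms(1) subspace_UNIV] by simp
  have "dim (range L) \<noteq> DIM(complex^'n)"
  proof
    assume "dim (range L) = DIM(complex^'n)"
    then have "span (range L) = UNIV"
      by (rule dim_eq_full[THEN iffD1])
    with assms(2) show False
      by (simp only: span_eq)
  qed
  then have "dim (range L) < DIM(complex^'n)"
    using dim_subset_UNIV[of "range L"] by linarith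
  then obtain a :: "complex^'n" where "a \<noteq> 0" and "span (range L) \<subseteq> {x. a \<bullet> x = 0}"
    using lowdim_subset_hyperplane by blast
  with span_eq have a: "a \<bullet> x = 0" if "x \<in> range L" for x
    using that by blast
  text \<open>The real hyperplane \<open>a\<^sup>\<bottom>\<close> is cut out by \<open>Re (dot u x) = 0\<close>; closure of \<open>range L\<close>
    under multiplication by \<open>\<i>\<close> upgrades this to the complex hyperplane \<open>dot u x = 0\<close>.\<close>
  define u where "u = (\<chi> r. cnj (a $ r))"
  have Re_dot_zero: "Re (dot u x) = 0" if "x \<in> range L" for x
    using a[OF that] by (simp add: inner_eq_Re_dot_cnj u_def)
  show thesis
  proof
    show "u \<noteq> 0"
      using \<open>a \<noteq> 0\<close> by (simp add: u_def vec_eq_iff)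
    fix d
    have "Re (\<i> * dot u (L d)) = 0"
      using Re_dot_zero[OF imag_closed[of "L d"]] by (simp add: dot_scalar_right)
    then show "dot u (L d) = 0"
      using Re_dot_zero[of "L d"] by (simp add: complex_eq_iff)
  qed
qed

lemma zero_if_annihilates_surj:
  fixes L :: "'a \<Rightarrow> 'b::comm_semiring_1^'n"
  assumes "surj L" and "\<And>d. dot y (L d) = 0"
  shows "y = 0"
proof -
  have "y $ i = 0" for i
  proof -
    obtain d where "L d = axis i 1"
      using assms(1) by (metis surjD)
    then show ?thesis
      using assms(2)[of d] by (simp add: dot_axis_right)
  qed
  then show ?thesis by (simp add: vec_eq_iff)
qed

lemma has_derivative_bilinear_at:
  fixes h :: "'a::euclidean_space \<Rightarrow> 'b::euclidean_space \<Rightarrow> 'c::euclidean_space"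
  assumes "bilinear h"
  shows "((\<lambda>(x, y). h x y) has_derivative (\<lambda>(dx, dy). h x dy + h dx y)) (at (x, y))"
  using bounded_bilinear.FDERIV[OF assms[unfolded bilinear_conv_bounded_bilinear]
      has_derivative_fst[OF has_derivative_ident] has_derivative_snd[OF has_derivative_ident],
      of "(x, y)"]
  by (simp add: split_def)

lemma bilinear_eqs_X: "bilinear (\<lambda>z w. eqs_X A (z, w))"
  unfolding bilinear_def
  by (auto intro!: linearI simp: eqs_X_def vec_eq_iff matrix_vector_mult_def
      sum.distrib sum_distrib_left algebra_simps scaleR_conv_of_real[where 'a=complex])

lemma bilinear_eqs_U: "bilinear (\<lambda>y w. eqs_U A (y, w))"
  unfolding bilinear_def
  by (auto intro!: linearI simp: eqs_U_def mat_comb_def vec_eq_iff matrix_vector_mult_def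
      sum.distrib sum_distrib_left sum_distrib_right algebra_simps scaleR_conv_of_real[where 'a=complex])

lemma eqs_X_has_derivative:
  "(eqs_X A has_derivative (\<lambda>(dz, dw). eqs_X A (z, dw) + eqs_X A (dz, w))) (at (z, w))"
  using has_derivative_bilinear_at[OF bilinear_eqs_X] by (simp add: split_def)

lemma eqs_U_has_derivative:
  "(eqs_U A has_derivative (\<lambda>(dy, dw). eqs_U A (y, dw) + eqs_U A (dy, w))) (at (y, w))"
  using has_derivative_bilinear_at[OF bilinear_eqs_U] by (simp add: split_def)

lemma eqs_U_scalar_left: "eqs_U A (c *s y, w) = c *s eqs_U A (y, w)"
  by (simp add: eqs_U_def mat_comb_def matrix_vector_mult_def vec_eq_iff
      sum_distrib_left sum_distrib_right mult_ac)

lemma eqs_U_scalar_right: "eqs_U A (y, c *s w) = c *s eqs_U A (y, w)"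
  by (simp add: eqs_U_def vector_scalar_commute)

lemma dot_eqs_X_eq_dot_eqs_U: "dot y (eqs_X A (z, v)) = dot z (eqs_U A (y, v))"
proof -
  have "dot y (eqs_X A (z, v)) = (\<Sum>i\<in>UNIV. \<Sum>r\<in>UNIV. \<Sum>s\<in>UNIV. y $ i * z $ r * A i $ r $ s * v $ s)"
    by (simp add: dot_def eqs_X_def matrix_vector_mult_def sum_distrib_left mult.assoc)
  also have "\<dots> = (\<Sum>r\<in>UNIV. \<Sum>i\<in>UNIV. \<Sum>s\<in>UNIV. y $ i * z $ r * A i $ r $ s * v $ s)"
    by (rule sum.swap)
  also have "\<dots> = (\<Sum>r\<in>UNIV. \<Sum>s\<in>UNIV. \<Sum>i\<in>UNIV. y $ i * z $ r * A i $ r $ s * v $ s)"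
    by (rule sum.cong[OF refl], rule sum.swap)
  also have "\<dots> = dot z (eqs_U A (y, v))"
    by (simp add: dot_def eqs_U_def mat_comb_def matrix_vector_mult_def
        sum_distrib_left sum_distrib_right mult_ac)
  finally show ?thesis .
qed

lemma imag_closed_range_derivative_eqs_U:
  assumes "x \<in> range (\<lambda>(dy, dw). eqs_U A (y, dw) + eqs_U A (dy, w))"
  shows "\<i> *s x \<in> range (\<lambda>(dy, dw). eqs_U A (y, dw) + eqs_U A (dy, w))"
proof -
  obtain dy dw where "x = eqs_U A (y, dw) + eqs_U A (dy, w)"
    using assms by auto
  then have "\<i> *s x = eqs_U A (y, \<i> *s dw) + eqs_U A (\<i> *s dy, w)"
    by (simp add: eqs_U_scalar_left eqs_U_scalar_right)
  then show ?thesis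
    by auto
qed

lemma eqs_X_zero_if_annihilates_derivative_eqs_U:
  assumes "\<And>dy dw. dot u (eqs_U A (y, dw) + eqs_U A (dy, w)) = 0"
  shows "eqs_X A (u, w) = 0"
proof -
  have "eqs_X A (u, w) $ i = dot u (eqs_U A (axis i 1, w))" for i
    by (metis dot_axis_left dot_eqs_X_eq_dot_eqs_U)
  moreover have "dot u (eqs_U A (c, w)) = 0" for c
    using assms[where dy = c and dw = 0] bilinear_rzero[OF bilinear_eqs_U] by simp
  ultimately show ?thesis
    by (simp add: vec_eq_iff)
qed

lemma annihilates_derivative_eqs_X_if_annihilates_derivative_eqs_U:
  assumes "\<And>dy dw. dot u (eqs_U A (y, dw) + eqs_U A (dy, w)) = 0"
    and "eqs_U A (y, w) = 0"
  shows "dot y (eqs_X A (u, dv) + eqs_X A (dz, w)) = 0"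
proof -
  have "dot u (eqs_U A (y, dv)) = 0"
    using assms(1)[where dy = 0 and dw = dv] bilinear_lzero[OF bilinear_eqs_U] by simp
  then show ?thesis
    using assms(2) by (simp add: dot_add_right dot_zero_right dot_eqs_X_eq_dot_eqs_U)
qed

theorem claim3p7:
  fixes A :: "5 \<Rightarrow> complex^5^5"
  assumes "mats_lin_indep A"
    and "\<forall>i. sym_mat (A i)"
    and "smooth_ci_P4P4 (eqs_X A) (\<lambda>_. True)"
  shows "smooth_ci_P4P4 (eqs_U A) (\<lambda>(y, w). det (mat_comb y A) = 0)"
  unfolding smooth_ci_P4P4_def
proof (intro allI impI)
  fix y w :: "complex^5"
  assume "y \<noteq> 0 \<and> w \<noteq> 0 \<and> (\<lambda>(y, w). det (mat_comb y A) = 0) (y, w) \<and> eqs_U A (y, w) = 0"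
  then have "y \<noteq> 0" and "w \<noteq> 0" and on_U: "eqs_U A (y, w) = 0"
    by auto
  define L where "L = (\<lambda>(dy, dw). eqs_U A (y, dw) + eqs_U A (dy, w))"
  have deriv: "(eqs_U A has_derivative L) (at (y, w))"
    unfolding L_def by (rule eqs_U_has_derivative)
  have "surj L"
  proof (rule ccontr)
    assume "\<not> surj L"
    obtain u where "u \<noteq> 0" and "\<And>d. dot u (L d) = 0"
      using exists_annihilator_if_not_surj[OF has_derivative_linear[OF deriv] \<open>\<not> surj L\<close>
          imag_closed_range_derivative_eqs_U[where A = A and y = y and w = w, folded L_def]]
      by blast
    have annihilates: "dot u (eqs_U A (y, dw) + eqs_U A (dy, w)) = 0" for dy dw
      using \<open>\<And>d. dot u (L d) = 0\<close>[of "(dy, dw)"] by (simp add: L_def)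
    from \<open>u \<noteq> 0\<close> \<open>w \<noteq> 0\<close> eqs_X_zero_if_annihilates_derivative_eqs_U[OF annihilates]
    obtain L' where deriv': "(eqs_X A has_derivative L') (at (u, w))" and "surj L'"
      using assms(3) unfolding smooth_ci_P4P4_def by blast
    have "L' = (\<lambda>(dz, dv). eqs_X A (u, dv) + eqs_X A (dz, w))"
      using has_derivative_unique[OF deriv' eqs_X_has_derivative] .
    then have "dot y (L' d) = 0" for d
      using annihilates_derivative_eqs_X_if_annihilates_derivative_eqs_U[OF annihilates on_U]
      by (auto split: prod.splits)
    with \<open>surj L'\<close> \<open>y \<noteq> 0\<close> show False
      using zero_if_annihilates_surj by blast
  qed
  with deriv show "\<exists>L. (eqs_U A has_derivative L) (at (y, w)) \<and> surj L"
    by blast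
qed

end
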